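(* Let $p$ be an integer with $|p|>1$ and let $G=\mathbb{Z}[1/p]\rtimes\mathbb{Z}$ with multiplication $(f_1,c_1)(f_2,c_2)=(f_1+p^{-c_1}f_2,\,c_1+c_2)$. Let $C=\{(f_i,c_i)\}$ be a finite generating set of $G$ closed under inverses, let $c=\max\{c_i \mid (f_i,c_i)\in C\}$, and let $B(n)$ denote the set of elements of $G$ of word length at most $n$ with respect to $C$. Then there is a constant $M$ (depending on $p$ and $C$) such that for every $n\ge 0$ and every element $(f,0)\in B(n)$, either $|f|\le M|p|^{nc/4}$ or $\mathrm{denom}(f)\le M|p|^{nc/4}$. Further, for every such $(f,0)\in B(n)$, both $|f|\le M|p|^{nc/2}$ and $\mathrm{denom}(f)\le M|p|^{nc/2}$.
   Context: $G$ is isomorphic to the Baumslag-Solitar group $B_{1,p}=\langle a,t\mid t^{-1}at=a^p\rangle$. Every element of $\mathbb{Z}[1/p]$ has the form $m/p^{n}$ with $m,n\in\mathbb{Z}$. For $f\in\mathbb{Z}[1/p]$, $|f|$ is its usual absolute value, and the denominator $\mathrm{denom}(f)$ is $|p|^{n}$ where $n\ge 0$ is the least nonnegative integer such that $f=m/p^{n}$ for some integer $m$. *)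

theory Defs
  imports Complex_Main
begin

definition Zinv :: "int \<Rightarrow> rat set" where
  "Zinv p = {f. \<exists>m::int. \<exists>n::nat. f = of_int m / of_int p ^ n}"

definition BSgroup :: "int \<Rightarrow> (rat \<times> int) set" where
  "BSgroup p = Zinv p \<times> UNIV"

definition bs_mult :: "int \<Rightarrow> rat \<times> int \<Rightarrow> rat \<times> int \<Rightarrow> rat \<times> int" where
  "bs_mult p x y = (fst x + (of_int p) powi (- snd x) * fst y, snd x + snd y)"

definition bs_one :: "rat \<times> int" where
  "bs_one = (0, 0)"

definition bs_inv :: "int \<Rightarrow> rat \<times> int \<Rightarrow> rat \<times> int" where
  "bs_inv p x = (- ((of_int p) powi (snd x) * fst x), - snd x)"

definition word_eval :: "int \<Rightarrow> (rat \<times> int) list \<Rightarrow> rat \<times> int" where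
  "word_eval p ws = foldr (bs_mult p) ws bs_one"

text \<open>C generates G (as a group); closure of C under inverses is assumed separately.\<close>
definition generates :: "int \<Rightarrow> (rat \<times> int) set \<Rightarrow> bool" where
  "generates p C \<longleftrightarrow> C \<subseteq> BSgroup p \<and>
     (\<forall>g \<in> BSgroup p. \<exists>ws. set ws \<subseteq> C \<union> bs_inv p ` C \<and> word_eval p ws = g)"

definition ball :: "int \<Rightarrow> (rat \<times> int) set \<Rightarrow> nat \<Rightarrow> (rat \<times> int) set" where
  "ball p C n = {word_eval p ws | ws. set ws \<subseteq> C \<and> length ws \<le> n}"

definition denom :: "int \<Rightarrow> rat \<Rightarrow> real" where
  "denom p f = real_of_int \<bar>p\<bar> ^ (LEAST n::nat. \<exists>m::int. f = of_int m / of_int p ^ n)"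

end

theory Submission
  imports Defs
begin

text \<open>A word g_1 ... g_n in generators g_i = (f_i, c_i) evaluates to
  (\<Sum>i. p^(-S_i) f_i, S_(n+1)), where S_i = c_1 + ... + c_(i-1). If p^N clears the
  denominators of the generators, the denominator of the first coordinate divides p^(N + A), A
  the largest prefix sum. For a word of total degree 0, cutting it after that highest prefix
  leaves two halves of length at least A / c each, and a geometric estimate of the sum on each
  half gives |f| \<le> const * |p|^(c n / 2 - A), while denom(f) \<le> const * |p|^A. Both
  exponents are at most c n / 2, and since 0 \<le> A \<le> c n / 2 one of them is at most c n / 4.\<close>

lemma of_rat_power_int: "(of_rat (x powi k) :: 'a::field_char_0) = of_rat x powi k"
  by (simp add: power_int_def of_rat_power of_rat_inverse)

lemma abs_of_rat_power_int:
  "p \<noteq> 0 \<Longrightarrow> \<bar>real_of_rat (of_int p powi k)\<bar> = real_of_int \<bar>p\<bar> powr real_of_int k"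
  by (simp add: of_rat_power_int power_int_abs powr_real_of_int')

lemma abs_sum_list_le:
  fixes xs :: "'a::linordered_idom list"
  assumes "\<forall>x\<in>set xs. \<bar>x\<bar> \<le> c"
  shows "\<bar>sum_list xs\<bar> \<le> c * of_nat (length xs)"
  using assms by (induction xs) (auto simp: algebra_simps intro: abs_triangle_ineq order_trans)

lemma word_eval_Nil [simp]: "word_eval p [] = (0, 0)"
  by (simp add: word_eval_def bs_one_def)

lemma word_eval_Cons: "word_eval p (g # ws) = bs_mult p g (word_eval p ws)"
  by (simp add: word_eval_def)

lemma snd_word_eval: "snd (word_eval p ws) = sum_list (map snd ws)"
  by (induction ws) (auto simp: word_eval_Cons bs_mult_def)

lemma fst_word_eval_Cons:
  "fst (word_eval p (g # ws)) = fst g + of_int p powi (- snd g) * fst (word_eval p ws)"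
  by (simp add: word_eval_Cons bs_mult_def)

lemma word_eval_append:
  assumes "p \<noteq> 0"
  shows "word_eval p (u @ v) = bs_mult p (word_eval p u) (word_eval p v)"
proof (induction u)
  case Nil
  then show ?case by (simp add: bs_mult_def)
next
  case (Cons g u)
  have "(of_int p :: rat) powi (- a - b) = of_int p powi (- a) * of_int p powi (- b)" for a b
    using assms by (simp add: power_int_diff power_int_minus field_simps)
  then show ?case
    by (simp add: word_eval_Cons Cons bs_mult_def algebra_simps)
qed

fun max_prefix_sum :: "int list \<Rightarrow> int" where
  "max_prefix_sum [] = 0"
| "max_prefix_sum (x # xs) = max 0 (x + max_prefix_sum xs)"

lemma max_prefix_sum_nonneg: "max_prefix_sum xs \<ge> 0"
  by (cases xs) auto

lemma max_prefix_sum_attained: "\<exists>ys zs. xs = ys @ zs \<and> sum_list ys = max_prefix_sum xs"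
proof (induction xs)
  case Nil
  then show ?case by simp
next
  case (Cons x xs)
  then obtain ys zs where "xs = ys @ zs" "sum_list ys = max_prefix_sum xs"
    by blast
  then show ?case
    by (cases "x + max_prefix_sum xs \<ge> 0") (auto intro: exI[of _ "x # ys"] exI[of _ "[]"])
qed

lemma Zinv_common_power:
  assumes "p \<noteq> 0" and "finite X" and "X \<subseteq> Zinv p"
  shows "\<exists>N. \<forall>x\<in>X. x * of_int p ^ N \<in> \<int>"
  using assms(2,3)
proof (induction X rule: finite_induct)
  case empty
  then show ?case by simp
next
  case (insert x X)
  then obtain N where N: "\<forall>y\<in>X. y * of_int p ^ N \<in> \<int>"
    by auto
  from insert.prems obtain m n where x: "x = of_int m / of_int p ^ n"
    by (auto simp: Zinv_def)
  have "x * of_int p ^ (N + n) \<in> \<int>"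
  proof -
    have "x * of_int p ^ (N + n) = of_int (m * p ^ N)"
      using assms(1) by (simp add: x power_add)
    then show ?thesis
      by (metis Ints_of_int)
  qed
  moreover have "y * of_int p ^ (N + n) \<in> \<int>" if "y \<in> X" for y
  proof -
    have "y * of_int p ^ (N + n) = (y * of_int p ^ N) * of_int (p ^ n)"
      by (simp add: power_add)
    then show ?thesis
      using N that by (metis Ints_mult Ints_of_int)
  qed
  ultimately show ?case
    by blast
qed

lemma denom_le_powr:
  assumes "p \<noteq> 0" and "0 \<le> k" and "f * of_int p powi k \<in> \<int>"
  shows "denom p f \<le> real_of_int \<bar>p\<bar> powr real_of_int k"
proof -
  obtain n where k: "k = int n"
    using assms(2) nonneg_eq_int by blast
  from assms(3) obtain m where "f * of_int p ^ n = of_int m"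
    by (auto simp: k elim!: Ints_cases)
  then have "f = of_int m / of_int p ^ n"
    using assms(1) by (simp add: field_simps)
  then have "(LEAST n. \<exists>m::int. f = of_int m / of_int p ^ n) \<le> n"
    by (intro Least_le) blast
  then have "denom p f \<le> real_of_int \<bar>p\<bar> ^ n"
    unfolding denom_def using assms(1) by (intro power_increasing) auto
  then show ?thesis
    using assms(1) by (simp add: k powr_realpow)
qed

lemma Ints_mult_power_int_mono:
  fixes x :: "'a::field"
  assumes "x * of_int p ^ N \<in> \<int>" and "int N \<le> k"
  shows "x * of_int p powi k \<in> \<int>"
proof -
  obtain d where "k = int (N + d)"
    using assms(2) by (metis zle_iff_zadd of_nat_add)
  then have "x * of_int p powi k = (x * of_int p ^ N) * of_int p ^ d"
    by (simp only: power_int_of_nat power_add mult.assoc)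
  then show ?thesis
    using assms(1) by (metis Ints_mult Ints_power Ints_of_int)
qed

lemma fst_word_eval_mult_power_int_Ints:
  assumes "p \<noteq> 0" and "\<forall>g\<in>set ws. fst g * of_int p ^ N \<in> \<int>"
    and "int N + max_prefix_sum (map snd ws) \<le> k"
  shows "fst (word_eval p ws) * of_int p powi k \<in> \<int>"
  using assms(2,3)
proof (induction ws arbitrary: k)
  case Nil
  then show ?case by simp
next
  case (Cons g ws)
  have shift: "(of_int p :: rat) powi (- snd g) * of_int p powi k = of_int p powi (k - snd g)"
    using assms(1) by (simp add: power_int_add[symmetric])
  have "fst (word_eval p (g # ws)) * of_int p powi k
      = fst g * of_int p powi k + fst (word_eval p ws) * of_int p powi (k - snd g)"
    unfolding fst_word_eval_Cons shift[symmetric] by (simp add: algebra_simps)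
  moreover have "fst g * of_int p powi k \<in> \<int>"
    using Cons.prems max_prefix_sum_nonneg[of "map snd ws"]
    by (intro Ints_mult_power_int_mono[of _ _ N]) auto
  moreover have "fst (word_eval p ws) * of_int p powi (k - snd g) \<in> \<int>"
    using Cons.prems by (intro Cons.IH) auto
  ultimately show ?case
    by simp
qed

lemma denom_word_eval_le:
  assumes "p \<noteq> 0" and "\<forall>g\<in>set ws. fst g * of_int p ^ N \<in> \<int>"
  shows "denom p (fst (word_eval p ws))
    \<le> real_of_int \<bar>p\<bar> ^ N * real_of_int \<bar>p\<bar> powr max_prefix_sum (map snd ws)"
proof -
  have "denom p (fst (word_eval p ws))
      \<le> real_of_int \<bar>p\<bar> powr real_of_int (int N + max_prefix_sum (map snd ws))"
    using assms max_prefix_sum_nonneg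
    by (intro denom_le_powr fst_word_eval_mult_power_int_Ints) (auto intro: add_nonneg_nonneg)
  then show ?thesis
    using assms(1) by (simp add: powr_add powr_realpow)
qed

text \<open>For t = -c the bound grows by the factor q^c and the slack L pays for F;
  for t > -c the bound grows by q^((c-t)/2), which exceeds the factor q^(-t) carried by x by at
  least q^(-c) (q^(1/2) - 1), and that margin pays for F + L.\<close>
lemma word_bound_step:
  fixes q F K L E x :: real and c t :: int
  assumes q: "q > 1" and t: "\<bar>t\<bar> \<le> c" and E: "E \<ge> 0" and L: "L \<ge> 0" and K: "K \<ge> 0"
    and FL_c: "F + L \<le> q powr c * L"
    and FL_K: "F + L \<le> K * (q powr (- c) * (q powr (1/2) - 1))"
    and x: "x + L \<le> K * q powr E"
  shows "F + q powr (- t) * x + L \<le> K * q powr (E + (c - t) / 2)"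
proof -
  define Y where "Y = q powr (- t)"
  have "F + Y * x + L \<le> F + Y * (K * q powr E - L) + L"
    using x by (simp add: Y_def mult_left_mono)
  also have "\<dots> \<le> K * q powr E * (Y * q powr ((c + t) / 2))"
  proof (cases "t = - c")
    case True
    then show ?thesis
      using FL_c q by (simp add: Y_def algebra_simps)
  next
    case False
    then have "q powr (1/2) \<le> q powr ((c + t) / 2)" and "q powr (- c) \<le> Y"
      using q t by (auto simp: Y_def intro!: powr_mono)
    moreover have "1 \<le> q powr E" and "1 \<le> q powr (1/2)"
      using q E by (auto intro: ge_one_powr_ge_zero)
    ultimately have "K * (q powr (- c) * (q powr (1/2) - 1))
        \<le> K * q powr E * (Y * (q powr ((c + t) / 2) - 1))"
      using K by (intro mult_mono) (auto simp: Y_def mult_le_cancel_left1 intro: order_trans)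
    moreover have "0 \<le> Y * L"
      using L by (simp add: Y_def)
    ultimately show ?thesis
      using FL_K by (simp add: algebra_simps)
  qed
  also have "\<dots> = K * q powr (E + (c - t) / 2)"
    by (simp add: Y_def powr_add[symmetric] field_simps)
  finally show ?thesis
    by (simp add: Y_def)
qed

lemma abs_fst_word_eval_plus_le:
  fixes p c :: int and F K L :: real
  defines "q \<equiv> real_of_int \<bar>p\<bar>"
  assumes p: "\<bar>p\<bar> > 1"
    and gens: "\<forall>g\<in>set ws. \<bar>real_of_rat (fst g)\<bar> \<le> F \<and> \<bar>snd g\<bar> \<le> c"
    and L: "0 \<le> L" and KL: "L \<le> K"
    and FL_c: "F + L \<le> q powr c * L"
    and FL_K: "F + L \<le> K * (q powr (- c) * (q powr (1/2) - 1))"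
  shows "\<bar>real_of_rat (fst (word_eval p ws))\<bar> + L
    \<le> K * q powr ((c * real (length ws) - snd (word_eval p ws)) / 2)"
  using gens
proof (induction ws)
  case Nil
  then show ?case
    using KL p by (auto simp: q_def)
next
  case (Cons g ws)
  have q: "q > 1"
    using p by (simp add: q_def)
  define E where "E = (c * real (length ws) - snd (word_eval p ws)) / 2"
  have "\<bar>sum_list (map snd ws)\<bar> \<le> c * int (length ws)"
    using Cons.prems abs_sum_list_le[of "map snd ws" c] by auto
  then have "real_of_int (sum_list (map snd ws)) \<le> c * real (length ws)"
    by (metis abs_le_D1 of_int_le_iff of_int_mult of_int_of_nat_eq)
  then have "E \<ge> 0"
    unfolding E_def snd_word_eval by simp
  have "\<bar>real_of_rat (fst (word_eval p (g # ws)))\<bar>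
      \<le> \<bar>real_of_rat (fst g)\<bar>
        + \<bar>real_of_rat (of_int p powi (- snd g))\<bar> * \<bar>real_of_rat (fst (word_eval p ws))\<bar>"
    unfolding fst_word_eval_Cons of_rat_add of_rat_mult by (metis abs_mult abs_triangle_ineq)
  also have "\<bar>real_of_rat (of_int p powi (- snd g))\<bar> = q powr (- snd g)"
    using p abs_of_rat_power_int[of p "- snd g"] by (auto simp: q_def)
  finally have "\<bar>real_of_rat (fst (word_eval p (g # ws)))\<bar> + L
      \<le> F + q powr (- snd g) * \<bar>real_of_rat (fst (word_eval p ws))\<bar> + L"
    using Cons.prems by auto
  also have "\<dots> \<le> K * q powr (E + (c - snd g) / 2)"
    using Cons q \<open>E \<ge> 0\<close> L KL FL_c FL_K
    by (intro word_bound_step) (auto simp: E_def)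
  also have "E + (c - snd g) / 2 = (c * real (length (g # ws)) - snd (word_eval p (g # ws))) / 2"
    by (simp add: E_def snd_word_eval field_simps)
  finally show ?case .
qed

lemma abs_fst_word_eval_le:
  fixes p c :: int and C :: "(rat \<times> int) set"
  defines "q \<equiv> real_of_int \<bar>p\<bar>"
  assumes p: "\<bar>p\<bar> > 1" and C: "finite C" and c: "c > 0" and snd_C: "\<forall>g\<in>C. \<bar>snd g\<bar> \<le> c"
  obtains K :: real where "K \<ge> 0"
    and "\<And>ws. set ws \<subseteq> C \<Longrightarrow> \<bar>real_of_rat (fst (word_eval p ws))\<bar>
      \<le> K * q powr ((c * real (length ws) - snd (word_eval p ws)) / 2)"
proof -
  have q: "q > 1"
    using p by (simp add: q_def)
  define F where "F = (\<Sum>g\<in>C. \<bar>real_of_rat (fst g)\<bar>)"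
  define L where "L = F / (q - 1)"
  define D where "D = q powr (- c) * (q powr (1/2) - 1)"
  define K where "K = (F + L) / D + L"
  have "F \<ge> 0"
    unfolding F_def by (intro sum_nonneg) simp
  then have L: "L \<ge> 0"
    using q by (simp add: L_def)
  have "q powr 0 < q powr (1/2)"
    using q by (intro powr_less_mono) auto
  then have "D > 0"
    using q by (simp add: D_def)
  have "F + L = q * L"
    using q by (simp add: L_def field_simps)
  also have "\<dots> \<le> q powr c * L"
    using q c L powr_mono[of 1 "real_of_int c" q] by (intro mult_right_mono) auto
  finally have FL_c: "F + L \<le> q powr c * L" .
  have FL_K: "F + L \<le> K * D" and KL: "L \<le> K"
    using \<open>D > 0\<close> \<open>F \<ge> 0\<close> L by (simp_all add: K_def field_simps)
  have "\<bar>real_of_rat (fst (word_eval p ws))\<bar> + L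
      \<le> K * q powr ((c * real (length ws) - snd (word_eval p ws)) / 2)" if "set ws \<subseteq> C" for ws
  proof -
    have "\<forall>g\<in>C. \<bar>real_of_rat (fst g)\<bar> \<le> F"
      unfolding F_def using C by (intro ballI member_le_sum) auto
    then show ?thesis
      using that snd_C L KL FL_c FL_K unfolding q_def D_def
      by (intro abs_fst_word_eval_plus_le[OF p]) auto
  qed
  then show thesis
    using that L KL by (meson order_trans le_add_same_cancel1)
qed

text \<open>Cut a word of total degree 0 after its highest prefix, of height A. Both halves then
  have length at least A / c, so each contributes at most K q^(c |ws| / 2 - A) to |f|.\<close>
lemma zero_sum_word_bounds:
  fixes p c :: int and K :: real and C :: "(rat \<times> int) set" and ws :: "(rat \<times> int) list"
  defines "q \<equiv> real_of_int \<bar>p\<bar>" and "A \<equiv> max_prefix_sum (map snd ws)"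
  assumes p: "\<bar>p\<bar> > 1" and K: "K \<ge> 0"
    and bound: "\<And>u. set u \<subseteq> C \<Longrightarrow> \<bar>real_of_rat (fst (word_eval p u))\<bar>
      \<le> K * q powr ((c * real (length u) - snd (word_eval p u)) / 2)"
    and snd_C: "\<forall>g\<in>C. \<bar>snd g\<bar> \<le> c"
    and word: "set ws \<subseteq> C" "word_eval p ws = (f, 0)"
  shows "2 * A \<le> c * int (length ws)"
    and "\<bar>real_of_rat f\<bar> \<le> 2 * K * q powr (c * real (length ws) / 2 - A)"
proof -
  have p0: "p \<noteq> 0" and q: "q > 1"
    using p by (auto simp: q_def)
  obtain u v where uv: "ws = u @ v" and Su: "sum_list (map snd u) = A"
    using max_prefix_sum_attained[of "map snd ws"] unfolding A_def map_eq_append_conv by blast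
  have uC: "set u \<subseteq> C" and vC: "set v \<subseteq> C"
    using word(1) uv by auto
  have Sv: "sum_list (map snd v) = - A"
    using word(2) Su snd_word_eval[of p ws] by (simp add: uv)
  have "\<bar>sum_list (map snd u)\<bar> \<le> c * int (length u)"
    using abs_sum_list_le[of "map snd u" c] snd_C uC by auto
  then have Au: "A \<le> c * int (length u)"
    using Su by linarith
  have "\<bar>sum_list (map snd v)\<bar> \<le> c * int (length v)"
    using abs_sum_list_le[of "map snd v" c] snd_C vC by auto
  then have Av: "A \<le> c * int (length v)"
    using Sv by linarith
  show "2 * A \<le> c * int (length ws)"
    using Au Av by (simp add: uv algebra_simps)
  have Au': "real_of_int A \<le> c * real (length u)" and Av': "real_of_int A \<le> c * real (length v)"
    using Au Av by (metis of_int_le_iff of_int_mult of_int_of_nat_eq)+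
  have f: "f = fst (word_eval p u) + of_int p powi (- A) * fst (word_eval p v)"
    using word(2) Su snd_word_eval[of p u] by (simp add: uv word_eval_append[OF p0] bs_mult_def)
  have "\<bar>real_of_rat f\<bar>
      \<le> \<bar>real_of_rat (fst (word_eval p u))\<bar>
        + \<bar>real_of_rat (of_int p powi (- A))\<bar> * \<bar>real_of_rat (fst (word_eval p v))\<bar>"
    unfolding f of_rat_add of_rat_mult by (metis abs_mult abs_triangle_ineq)
  also have "\<bar>real_of_rat (of_int p powi (- A))\<bar> = q powr (- A)"
    using p0 abs_of_rat_power_int[of p "- A"] by (auto simp: q_def)
  also have "\<bar>real_of_rat (fst (word_eval p u))\<bar> + q powr (- A) * \<bar>real_of_rat (fst (word_eval p v))\<bar>
      \<le> K * q powr ((c * real (length u) - A) / 2)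
        + q powr (- A) * (K * q powr ((c * real (length v) + A) / 2))"
    using bound[OF uC] bound[OF vC] Su Sv snd_word_eval[of p u] snd_word_eval[of p v]
    by (intro add_mono mult_left_mono) auto
  also have "\<dots> = K * q powr ((c * real (length u) - A) / 2) + K * q powr ((c * real (length v) - A) / 2)"
    by (simp add: powr_add[symmetric] field_simps)
  also have "\<dots> \<le> K * q powr (c * real (length ws) / 2 - A) + K * q powr (c * real (length ws) / 2 - A)"
    using q K Au' Av' by (intro add_mono mult_left_mono powr_mono) (auto simp: uv field_simps)
  finally show "\<bar>real_of_rat f\<bar> \<le> 2 * K * q powr (c * real (length ws) / 2 - A)"
    by simp
qed

lemma zero_sum_word_tradeoff:
  fixes p c :: int and C :: "(rat \<times> int) set"
  defines "q \<equiv> real_of_int \<bar>p\<bar>"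
  assumes p: "\<bar>p\<bar> > 1" and C: "finite C" and c: "c > 0" and snd_C: "\<forall>g\<in>C. \<bar>snd g\<bar> \<le> c"
    and N: "\<forall>g\<in>C. fst g * of_int p ^ N \<in> \<int>"
  obtains M :: real where "M \<ge> 0"
    and "\<And>ws f. set ws \<subseteq> C \<Longrightarrow> word_eval p ws = (f, 0) \<Longrightarrow> \<exists>a \<ge> 0.
      a \<le> c * real (length ws) / 2 \<and> \<bar>real_of_rat f\<bar> \<le> M * q powr (c * real (length ws) / 2 - a)
      \<and> denom p f \<le> M * q powr a"
proof -
  obtain K where "K \<ge> 0" and K: "\<And>ws. set ws \<subseteq> C \<Longrightarrow> \<bar>real_of_rat (fst (word_eval p ws))\<bar>
      \<le> K * q powr ((c * real (length ws) - snd (word_eval p ws)) / 2)"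
    using abs_fst_word_eval_le[OF p C c snd_C, folded q_def] by blast
  define M where "M = 2 * K + q ^ N"
  have p0: "p \<noteq> 0" and "q > 1"
    using p by (auto simp: q_def)
  have "2 * K \<le> M" and "q ^ N \<le> M"
    using \<open>K \<ge> 0\<close> \<open>q > 1\<close> by (simp_all add: M_def)
  have "\<exists>a \<ge> 0. a \<le> c * real (length ws) / 2
      \<and> \<bar>real_of_rat f\<bar> \<le> M * q powr (c * real (length ws) / 2 - a) \<and> denom p f \<le> M * q powr a"
    if ws: "set ws \<subseteq> C" "word_eval p ws = (f, 0)" for ws f
  proof -
    define A where "A = max_prefix_sum (map snd ws)"
    define s where "s = c * real (length ws) / 2"
    have "2 * A \<le> c * int (length ws)" and f_le: "\<bar>real_of_rat f\<bar> \<le> 2 * K * q powr (s - A)"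
      using zero_sum_word_bounds[OF p \<open>K \<ge> 0\<close> K[unfolded q_def] snd_C ws]
      unfolding A_def s_def q_def by simp_all
    then have "real_of_int (2 * A) \<le> real_of_int (c * int (length ws))"
      by (simp only: of_int_le_iff)
    then have "A \<le> s"
      by (simp add: s_def)
    have "\<forall>g\<in>set ws. fst g * of_int p ^ N \<in> \<int>"
      using N ws(1) by blast
    from denom_word_eval_le[OF p0 this] have d_le: "denom p f \<le> q ^ N * q powr A"
      using ws(2) unfolding A_def q_def by simp
    have "\<bar>real_of_rat f\<bar> \<le> M * q powr (s - A)" and "denom p f \<le> M * q powr A"
      using f_le d_le \<open>2 * K \<le> M\<close> \<open>q ^ N \<le> M\<close> mult_right_mono[of _ M "q powr _"]
      by (auto intro: order_trans)
    then show ?thesis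
      using \<open>A \<le> s\<close> max_prefix_sum_nonneg[of "map snd ws"]
      by (intro exI[of _ "real_of_int A"]) (simp add: A_def s_def)
  qed
  moreover have "M \<ge> 0"
    using \<open>K \<ge> 0\<close> \<open>2 * K \<le> M\<close> by linarith
  ultimately show thesis
    using that by blast
qed

lemma powr_tradeoff:
  fixes q M a s h x y :: real
  assumes "q \<ge> 1" and "M \<ge> 0" and "0 \<le> a" and "a \<le> s" and "s \<le> h"
    and x: "x \<le> M * q powr (s - a)" and y: "y \<le> M * q powr a"
  shows "(x \<le> M * q powr (h / 2) \<or> y \<le> M * q powr (h / 2)) \<and> x \<le> M * q powr h \<and> y \<le> M * q powr h"
proof -
  have mono: "M * q powr e \<le> M * q powr e'" if "e \<le> e'" for e e'
    using assms(1,2) that by (intro mult_left_mono powr_mono) auto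
  have "x \<le> M * q powr (h / 2) \<or> y \<le> M * q powr (h / 2)"
    using x y mono[of a "h / 2"] mono[of "s - a" "h / 2"] assms(5) by (cases "a \<le> h / 2") auto
  moreover have "x \<le> M * q powr h" and "y \<le> M * q powr h"
    using x y mono[of a h] mono[of "s - a" h] assms(3-5) by auto
  ultimately show ?thesis
    by blast
qed

lemma abs_snd_le_Max:
  assumes "finite C" and "\<forall>x\<in>C. bs_inv p x \<in> C" and "g \<in> C"
  shows "\<bar>snd g\<bar> \<le> Max (snd ` C)"
proof -
  have "snd g \<le> Max (snd ` C)" and "snd (bs_inv p g) \<le> Max (snd ` C)"
    using assms by (auto intro: Max_ge)
  then show ?thesis
    by (simp add: bs_inv_def)
qed

lemma generates_ex_snd_nonzero:
  assumes "generates p C"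
  shows "\<exists>g\<in>C. snd g \<noteq> 0"
proof (rule ccontr)
  assume all_zero: "\<not> (\<exists>g\<in>C. snd g \<noteq> 0)"
  have "(0, 1) \<in> BSgroup p"
    by (auto simp: BSgroup_def Zinv_def intro!: exI[of _ 0])
  then obtain ws where ws: "set ws \<subseteq> C \<union> bs_inv p ` C" and "word_eval p ws = (0, 1)"
    using assms unfolding generates_def by blast
  then have "sum_list (map snd ws) = 1"
    using snd_word_eval[of p ws] by simp
  moreover have "\<forall>g\<in>set ws. snd g = 0"
    using ws all_zero by (auto simp: bs_inv_def)
  ultimately show False
    using sum_list_nonpos[of "map snd ws"] by auto
qed

lemma Max_snd_pos:
  assumes "finite C" and "generates p C" and "\<forall>x\<in>C. bs_inv p x \<in> C"
  shows "Max (snd ` C) > 0"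
proof -
  obtain g where "g \<in> C" and "snd g \<noteq> 0"
    using generates_ex_snd_nonzero[OF assms(2)] by blast
  moreover from this have "\<bar>snd g\<bar> \<le> Max (snd ` C)"
    using abs_snd_le_Max[OF assms(1,3)] by blast
  ultimately show ?thesis
    by linarith
qed

lemma generates_common_power:
  assumes "p \<noteq> 0" and "finite C" and "generates p C"
  obtains N where "\<forall>g\<in>C. fst g * of_int p ^ N \<in> \<int>"
proof -
  have "C \<subseteq> Zinv p \<times> UNIV"
    using assms(3) by (simp add: generates_def BSgroup_def)
  then have "fst ` C \<subseteq> Zinv p"
    by auto
  then obtain N where "\<forall>x\<in>fst ` C. x * of_int p ^ N \<in> \<int>"
    using Zinv_common_power[OF assms(1) finite_imageI[OF assms(2)]] by blast
  then show thesis
    using that by simp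
qed

theorem lemma1:
  fixes p :: int and C :: "(rat \<times> int) set"
  assumes "\<bar>p\<bar> > 1"
    and "finite C"
    and "generates p C"
    and "\<forall>x \<in> C. bs_inv p x \<in> C"
  defines "c \<equiv> Max (snd ` C)"
  shows "\<exists>M::real.
     (\<forall>n::nat. \<forall>f. (f, 0) \<in> ball p C n \<longrightarrow>
        (\<bar>real_of_rat f\<bar> \<le> M * real_of_int \<bar>p\<bar> powr (real n * real_of_int c / 4)
         \<or> denom p f \<le> M * real_of_int \<bar>p\<bar> powr (real n * real_of_int c / 4))) \<and>
     (\<forall>n::nat. \<forall>f. (f, 0) \<in> ball p C n \<longrightarrow>
        \<bar>real_of_rat f\<bar> \<le> M * real_of_int \<bar>p\<bar> powr (real n * real_of_int c / 2)
        \<and> denom p f \<le> M * real_of_int \<bar>p\<bar> powr (real n * real_of_int c / 2))"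
proof -
  define q where "q = real_of_int \<bar>p\<bar>"
  have p0: "p \<noteq> 0"
    using assms(1) by auto
  have snd_C: "\<forall>g\<in>C. \<bar>snd g\<bar> \<le> c"
    using abs_snd_le_Max[OF assms(2,4)] unfolding c_def by blast
  have "c > 0"
    using Max_snd_pos[OF assms(2-4)] unfolding c_def .
  obtain N where "\<forall>g\<in>C. fst g * of_int p ^ N \<in> \<int>"
    using generates_common_power[OF p0 assms(2,3)] .
  then obtain M where "M \<ge> 0" and M: "\<And>ws f. set ws \<subseteq> C \<Longrightarrow> word_eval p ws = (f, 0) \<Longrightarrow>
      \<exists>a \<ge> 0. a \<le> c * real (length ws) / 2
        \<and> \<bar>real_of_rat f\<bar> \<le> M * q powr (c * real (length ws) / 2 - a) \<and> denom p f \<le> M * q powr a"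
    using zero_sum_word_tradeoff[OF assms(1,2) \<open>c > 0\<close> snd_C, folded q_def] by blast
  have "(\<bar>real_of_rat f\<bar> \<le> M * q powr (real n * c / 4) \<or> denom p f \<le> M * q powr (real n * c / 4))
      \<and> \<bar>real_of_rat f\<bar> \<le> M * q powr (real n * c / 2) \<and> denom p f \<le> M * q powr (real n * c / 2)"
    if mem: "(f, 0) \<in> ball p C n" for n f
  proof -
    obtain ws where ws: "set ws \<subseteq> C" "length ws \<le> n" "word_eval p ws = (f, 0)"
      using mem unfolding ball_def mem_Collect_eq by (metis (mono_tags, lifting))
    then obtain a where "0 \<le> a" "a \<le> c * real (length ws) / 2"
      and "\<bar>real_of_rat f\<bar> \<le> M * q powr (c * real (length ws) / 2 - a)" and "denom p f \<le> M * q powr a"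
      using M by blast
    moreover have "c * real (length ws) / 2 \<le> real n * c / 2"
      using ws(2) \<open>c > 0\<close> by (simp add: mult_left_mono)
    moreover have "q \<ge> 1"
      using assms(1) by (simp add: q_def)
    ultimately show ?thesis
      using \<open>M \<ge> 0\<close> powr_tradeoff[of q M a "c * real (length ws) / 2" "real n * c / 2"] by simp
  qed
  then show ?thesis
    unfolding q_def by (intro exI[of _ M]) blast
qed

end
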